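(* Let $p:(S_1,\le)\to(S_2,\le)$ be a bijective monotone map of posets, and let $\mathbb{B}p:\mathbb{B}(S_1,\le)\to\mathbb{B}(S_2,\le)$ be its $\mathbb{B}$-linear extension. If $\sigma:\mathbb{B}(S_2,\le)\to\mathbb{B}(S_1,\le)$ is a monotone map (for inclusion) with $\mathbb{B}p\circ\sigma=\mathrm{id}$, then $\sigma$ is right adjoint to $\mathbb{B}p$ (i.e. $L\subseteq\sigma(L')$ iff $\mathbb{B}p(L)\subseteq L'$) and $\sigma$ is $\mathbb{B}$-linear.
   Context: $\mathbb{B}=\{-\infty,0\}$ is the Boolean semifield; $\mathbb{B}$-modules are join-semilattices with least element and $\mathbb{B}$-linear maps preserve finite joins. For a poset $(S,\le)$, $\mathbb{B}(S,\le)$ is the set of lower subsets of $S$ that are the downward closure of a finite subset, with operation union and ordered by inclusion. For monotone $p$, $\mathbb{B}p$ sends the downward closure of a finite set $F$ to the downward closure of $p(F)$. *)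

theory Defs
  imports Main
begin

text \<open>A poset (S, \<le>) is represented by a carrier set S inside a type with a
partial order (class order); the order on S is the restriction of that order.\<close>

definition down :: "'a::order set \<Rightarrow> 'a set \<Rightarrow> 'a set" where
  "down S F = {x \<in> S. \<exists>y\<in>F. x \<le> y}"

definition Bmod :: "'a::order set \<Rightarrow> 'a set set" where
  "Bmod S = {L. \<exists>F. finite F \<and> F \<subseteq> S \<and> L = down S F}"

definition Bmap :: "'a::order set \<Rightarrow> 'b::order set \<Rightarrow> ('a \<Rightarrow> 'b) \<Rightarrow> 'a set \<Rightarrow> 'b set" where
  "Bmap S1 S2 p L = down S2 (p ` (SOME F. finite F \<and> F \<subseteq> S1 \<and> L = down S1 F))"

end

theory Submission
  imports Defs
begin

text \<open>For injective monotone p, the section condition forces \<sigma> to be the preimage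
map L' \<mapsto> S1 \<inter> p -` L'. Indeed, B p (\<sigma> (\<down>p x)) = \<down>p x yields y \<in> \<sigma> (\<down>p x) with
p x \<le> p y \<le> p x, so y = x, and monotonicity of \<sigma> then gives x \<in> \<sigma> L' whenever
p x \<in> L'; conversely B p (\<sigma> L') = L' puts p(\<sigma> L') inside L'. Preimages preserve
unions and \<emptyset>, and S1 \<inter> p -` L' is the largest set whose image lies in L'.\<close>

lemma Bmod_subset: "L \<in> Bmod S \<Longrightarrow> L \<subseteq> S"
  by (auto simp: Bmod_def down_def)

lemma Bmod_downward_closed: "L \<in> Bmod S \<Longrightarrow> y \<in> L \<Longrightarrow> x \<in> S \<Longrightarrow> x \<le> y \<Longrightarrow> x \<in> L"
  by (auto simp: Bmod_def down_def intro: order_trans)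

lemma down_in_Bmod: "finite F \<Longrightarrow> F \<subseteq> S \<Longrightarrow> down S F \<in> Bmod S"
  by (auto simp: Bmod_def)

lemma empty_in_Bmod: "{} \<in> Bmod S"
  using down_in_Bmod[of "{}" S] by (simp add: down_def)

lemma Bmod_Un:
  assumes "L \<in> Bmod S" and "M \<in> Bmod S"
  shows "L \<union> M \<in> Bmod S"
proof -
  obtain F G where "finite F" "F \<subseteq> S" "L = down S F" "finite G" "G \<subseteq> S" "M = down S G"
    using assms by (auto simp: Bmod_def)
  then have "L \<union> M = down S (F \<union> G)" "finite (F \<union> G)" "F \<union> G \<subseteq> S"
    by (auto simp: down_def)
  then show ?thesis by (auto simp: Bmod_def)
qed

lemma down_image_down:
  assumes mono_p: "\<forall>x\<in>S1. \<forall>y\<in>S1. x \<le> y \<longrightarrow> p x \<le> p y" and F: "F \<subseteq> S1"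
  shows "down S2 (p ` down S1 F) = down S2 (p ` F)"
proof
  show "down S2 (p ` down S1 F) \<subseteq> down S2 (p ` F)"
  proof
    fix z assume "z \<in> down S2 (p ` down S1 F)"
    then obtain x y where "z \<in> S2" "z \<le> p x" "x \<in> S1" "y \<in> F" "x \<le> y"
      by (auto simp: down_def)
    moreover have "p x \<le> p y" using mono_p F calculation by blast
    ultimately show "z \<in> down S2 (p ` F)" by (auto simp: down_def intro: order_trans)
  qed
  show "down S2 (p ` F) \<subseteq> down S2 (p ` down S1 F)"
    using F by (auto simp: down_def)
qed

lemma Bmap_eq_down_image:
  assumes "\<forall>x\<in>S1. \<forall>y\<in>S1. x \<le> y \<longrightarrow> p x \<le> p y" and "L \<in> Bmod S1"
  shows "Bmap S1 S2 p L = down S2 (p ` L)"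
proof -
  let ?F = "SOME F. finite F \<and> F \<subseteq> S1 \<and> L = down S1 F"
  have "\<exists>F. finite F \<and> F \<subseteq> S1 \<and> L = down S1 F"
    using assms(2) by (auto simp: Bmod_def)
  hence F: "finite ?F \<and> ?F \<subseteq> S1 \<and> L = down S1 ?F"
    by (rule someI_ex)
  then show ?thesis
    using down_image_down[OF assms(1), of ?F S2] by (simp add: Bmap_def)
qed

lemma down_subset_Bmod_iff:
  assumes "L' \<in> Bmod S" and "A \<subseteq> S"
  shows "down S A \<subseteq> L' \<longleftrightarrow> A \<subseteq> L'"
  using assms Bmod_downward_closed[OF assms(1)] by (auto simp: down_def)

lemma Bmap_right_inverse_eq_vimage:
  assumes inj: "inj_on p S1" and maps: "p ` S1 \<subseteq> S2"
    and mono_p: "\<forall>x\<in>S1. \<forall>y\<in>S1. x \<le> y \<longrightarrow> p x \<le> p y"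
    and \<sigma>_into: "\<forall>L'\<in>Bmod S2. \<sigma> L' \<in> Bmod S1"
    and \<sigma>_mono: "\<forall>L'\<in>Bmod S2. \<forall>M'\<in>Bmod S2. L' \<subseteq> M' \<longrightarrow> \<sigma> L' \<subseteq> \<sigma> M'"
    and sec: "\<forall>L'\<in>Bmod S2. Bmap S1 S2 p (\<sigma> L') = L'"
    and L': "L' \<in> Bmod S2"
  shows "\<sigma> L' = S1 \<inter> p -` L'"
proof -
  have image_\<sigma>: "down S2 (p ` \<sigma> N) = N" if "N \<in> Bmod S2" for N
    using that sec \<sigma>_into Bmap_eq_down_image[OF mono_p] by metis
  have image_\<sigma>_subset: "p ` \<sigma> N \<subseteq> N" if "N \<in> Bmod S2" for N
  proof -
    have "\<sigma> N \<subseteq> S1" using \<sigma>_into that Bmod_subset by blast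
    then have "p ` \<sigma> N \<subseteq> S2" using maps by blast
    then show ?thesis using image_\<sigma>[OF that] down_subset_Bmod_iff[OF that] by blast
  qed
  have point: "x \<in> \<sigma> (down S2 {p x})" if x: "x \<in> S1" for x
  proof -
    let ?D = "down S2 {p x}"
    have D: "?D \<in> Bmod S2" using x maps down_in_Bmod[of "{p x}" S2] by auto
    have "p x \<in> down S2 (p ` \<sigma> ?D)"
      using image_\<sigma>[OF D] x maps by (auto simp: down_def)
    then obtain y where y: "y \<in> \<sigma> ?D" "p x \<le> p y" by (auto simp: down_def)
    have "p y \<le> p x" using image_\<sigma>_subset[OF D] y(1) by (auto simp: down_def)
    with y(2) have "p y = p x" by simp
    moreover have "y \<in> S1" using y(1) Bmod_subset \<sigma>_into D by blast
    ultimately show ?thesis using inj x y(1) by (auto dest: inj_onD)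
  qed
  show ?thesis
  proof
    show "\<sigma> L' \<subseteq> S1 \<inter> p -` L'"
      using image_\<sigma>_subset[OF L'] Bmod_subset \<sigma>_into L' by blast
  next
    show "S1 \<inter> p -` L' \<subseteq> \<sigma> L'"
    proof
      fix x assume "x \<in> S1 \<inter> p -` L'"
      then have x: "x \<in> S1" and "p x \<in> L'" by auto
      then have "down S2 {p x} \<subseteq> L'"
        using down_subset_Bmod_iff[OF L', of "{p x}"] maps by auto
      moreover have "down S2 {p x} \<in> Bmod S2"
        using x maps down_in_Bmod[of "{p x}" S2] by auto
      ultimately show "x \<in> \<sigma> L'" using point[OF x] \<sigma>_mono L' by blast
    qed
  qed
qed

theorem mainTheorem8:
  fixes S1 :: "'a::order set" and S2 :: "'b::order set"
    and p :: "'a \<Rightarrow> 'b" and \<sigma> :: "'b set \<Rightarrow> 'a set"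
  assumes bij: "bij_betw p S1 S2"
    and mono_p: "\<forall>x\<in>S1. \<forall>y\<in>S1. x \<le> y \<longrightarrow> p x \<le> p y"
    and \<sigma>_into: "\<forall>L'\<in>Bmod S2. \<sigma> L' \<in> Bmod S1"
    and \<sigma>_mono: "\<forall>L'\<in>Bmod S2. \<forall>M'\<in>Bmod S2. L' \<subseteq> M' \<longrightarrow> \<sigma> L' \<subseteq> \<sigma> M'"
    and sec: "\<forall>L'\<in>Bmod S2. Bmap S1 S2 p (\<sigma> L') = L'"
  shows "(\<forall>L\<in>Bmod S1. \<forall>L'\<in>Bmod S2. (L \<subseteq> \<sigma> L') \<longleftrightarrow> (Bmap S1 S2 p L \<subseteq> L'))
       \<and> \<sigma> {} = {}
       \<and> (\<forall>L'\<in>Bmod S2. \<forall>M'\<in>Bmod S2. \<sigma> (L' \<union> M') = \<sigma> L' \<union> \<sigma> M')"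
proof -
  have maps: "p ` S1 \<subseteq> S2" and inj: "inj_on p S1"
    using bij by (auto simp: bij_betw_def)
  have \<sigma>_eq: "\<sigma> L' = S1 \<inter> p -` L'" if "L' \<in> Bmod S2" for L'
    using Bmap_right_inverse_eq_vimage[OF inj maps mono_p \<sigma>_into \<sigma>_mono sec that] .
  have adjoint: "L \<subseteq> \<sigma> L' \<longleftrightarrow> Bmap S1 S2 p L \<subseteq> L'"
    if L: "L \<in> Bmod S1" and L': "L' \<in> Bmod S2" for L L'
  proof -
    have "L \<subseteq> S1" using Bmod_subset[OF L] .
    then have "L \<subseteq> \<sigma> L' \<longleftrightarrow> p ` L \<subseteq> L'" and "p ` L \<subseteq> S2"
      using \<sigma>_eq[OF L'] maps by blast+
    then show ?thesis
      using Bmap_eq_down_image[OF mono_p L] down_subset_Bmod_iff[OF L'] by simp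
  qed
  have "\<sigma> {} = {}"
    using \<sigma>_eq[OF empty_in_Bmod] by simp
  moreover have "\<sigma> (L' \<union> M') = \<sigma> L' \<union> \<sigma> M'"
    if "L' \<in> Bmod S2" and "M' \<in> Bmod S2" for L' M'
    using \<sigma>_eq that Bmod_Un[OF that] by auto
  ultimately show ?thesis
    using adjoint by blast
qed

end
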